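(* Let $S$ be a discrete random variable (the hidden hypothesis) with finite domain $\mathrm{dom}(S)$. Let $O_1,\dots,O_N$ be random variables with finite discrete domains (the observations), and let $O^1,\dots,O^K$ ($K\ge 0$) be further observation random variables (the past observations), each with a finite discrete domain. Assume that all of $O_1,\dots,O_N,O^1,\dots,O^K$ are mutually conditionally independent given $S$. Assume the uniform observation entropy (UOE) property: for every $s\in\mathrm{dom}(S)$ with $P(S=s)>0$ and all $i,j\in\{1,\dots,N\}$, $$H(O_i\mid S=s)=H(O_j\mid S=s).$$ Fix values $o^1,\dots,o^K$ such that the event $O^{-}:=\{O^1=o^1,\dots,O^K=o^K\}$ has positive probability. Then the set of maximizers of $I(S,O'\mid O^{-})$ over $O'\in\{O_1,\dots,O_N\}$ equals the set of maximizers of $H(O'\mid O^{-})$ over $O'\in\{O_1,\dots,O_N\}$, that is, $$\operatorname{argmax}_{O'\in\{O_1,\dots,O_N\}} I(S,O'\mid O^{-})=\operatorname{argmax}_{O'\in\{O_1,\dots,O_N\}} H(O'\mid O^{-}).$$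
   Context: All information-theoretic quantities conditioned on the event $O^{-}$ are computed under the probability measure conditioned on $O^{-}$. In particular: - $H(O'\mid O^{-})$ is the entropy of $O'$ under $P(\cdot\mid O^{-})$; - $H(O'\mid S,O^{-})=\sum_s P(S=s\mid O^{-})\,H(O'\mid S=s,O^{-})$; - $I(S,O'\mid O^{-})$ is the mutual information between $S$ and $O'$ under $P(\cdot\mid O^{-})$. The generative model is: $s\sim P(S)$, and given $S=s$ each observation $o_i\sim P(O_i\mid S=s)$. *)

theory Defs
  imports "HOL-Probability.Probability"
begin

text \<open>Generative model: s ~ prior; given S = s, the current observation O_i
  has distribution lik i s (i in 1..N) and the past observation O^k has
  distribution plik k s (k < K), all mutually conditionally independent given S.
  The value of the past observation O^k is obs k.\<close>

definition ent :: "('a::finite \<Rightarrow> real) \<Rightarrow> real" where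
  "ent f = - (\<Sum>x\<in>UNIV. f x * log 2 (f x))"

text \<open>P(S = s, O_i = o, O^-): marginal of the conditionally independent joint.\<close>
definition joint_SOE ::
  "'s pmf \<Rightarrow> (nat \<Rightarrow> 's \<Rightarrow> 'o pmf) \<Rightarrow> (nat \<Rightarrow> 's \<Rightarrow> 'q pmf) \<Rightarrow> nat \<Rightarrow> (nat \<Rightarrow> 'q)
    \<Rightarrow> nat \<Rightarrow> 's \<Rightarrow> 'o \<Rightarrow> real" where
  "joint_SOE prior lik plik K obs i s x =
     pmf prior s * pmf (lik i s) x * (\<Prod>k<K. pmf (plik k s) (obs k))"

definition prob_E :: "'s::finite pmf \<Rightarrow> (nat \<Rightarrow> 's \<Rightarrow> 'q pmf) \<Rightarrow> nat \<Rightarrow> (nat \<Rightarrow> 'q) \<Rightarrow> real" where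
  "prob_E prior plik K obs = (\<Sum>s\<in>UNIV. pmf prior s * (\<Prod>k<K. pmf (plik k s) (obs k)))"

definition cjoint ::
  "'s::finite pmf \<Rightarrow> (nat \<Rightarrow> 's \<Rightarrow> 'o pmf) \<Rightarrow> (nat \<Rightarrow> 's \<Rightarrow> 'q pmf) \<Rightarrow> nat \<Rightarrow> (nat \<Rightarrow> 'q)
    \<Rightarrow> nat \<Rightarrow> 's \<Rightarrow> 'o \<Rightarrow> real" where
  "cjoint prior lik plik K obs i s x =
     joint_SOE prior lik plik K obs i s x / prob_E prior plik K obs"

definition cS ::
  "'s::finite pmf \<Rightarrow> (nat \<Rightarrow> 's \<Rightarrow> 'o::finite pmf) \<Rightarrow> (nat \<Rightarrow> 's \<Rightarrow> 'q pmf) \<Rightarrow> nat \<Rightarrow> (nat \<Rightarrow> 'q)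
    \<Rightarrow> nat \<Rightarrow> 's \<Rightarrow> real" where
  "cS prior lik plik K obs i s = (\<Sum>x\<in>UNIV. cjoint prior lik plik K obs i s x)"

definition cO ::
  "'s::finite pmf \<Rightarrow> (nat \<Rightarrow> 's \<Rightarrow> 'o::finite pmf) \<Rightarrow> (nat \<Rightarrow> 's \<Rightarrow> 'q pmf) \<Rightarrow> nat \<Rightarrow> (nat \<Rightarrow> 'q)
    \<Rightarrow> nat \<Rightarrow> 'o \<Rightarrow> real" where
  "cO prior lik plik K obs i x = (\<Sum>s\<in>UNIV. cjoint prior lik plik K obs i s x)"

definition cond_ent_O ::
  "'s::finite pmf \<Rightarrow> (nat \<Rightarrow> 's \<Rightarrow> 'o::finite pmf) \<Rightarrow> (nat \<Rightarrow> 's \<Rightarrow> 'q pmf) \<Rightarrow> nat \<Rightarrow> (nat \<Rightarrow> 'q)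
    \<Rightarrow> nat \<Rightarrow> real" where
  "cond_ent_O prior lik plik K obs i = ent (cO prior lik plik K obs i)"

definition cond_MI ::
  "'s::finite pmf \<Rightarrow> (nat \<Rightarrow> 's \<Rightarrow> 'o::finite pmf) \<Rightarrow> (nat \<Rightarrow> 's \<Rightarrow> 'q pmf) \<Rightarrow> nat \<Rightarrow> (nat \<Rightarrow> 'q)
    \<Rightarrow> nat \<Rightarrow> real" where
  "cond_MI prior lik plik K obs i =
     (\<Sum>s\<in>UNIV. \<Sum>x\<in>UNIV. cjoint prior lik plik K obs i s x *
        log 2 (cjoint prior lik plik K obs i s x /
               (cS prior lik plik K obs i s * cO prior lik plik K obs i x)))"

definition argmax_set :: "('a \<Rightarrow> real) \<Rightarrow> 'a set \<Rightarrow> 'a set" where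
  "argmax_set f A = {x \<in> A. \<forall>y\<in>A. f y \<le> f x}"

end

theory Submission
  imports Defs
begin

text \<open>Under P(. | O^-) the pair (S, O_i) is the mixture with posterior weights
  P(S = s | O^-) and components P(O_i | S = s), because the past observations are
  conditionally independent of O_i given S.  Hence I(S, O_i | O^-) = H(O_i | O^-) - H(O_i | S, O^-),
  and by uniform observation entropy the subtracted term is a weighted average of entropies that
  do not depend on i.  The two objectives thus differ by a constant and have the same maximisers.\<close>

lemma argmax_set_diff_const:
  assumes "\<And>i. i \<in> A \<Longrightarrow> f i = g i - c"
  shows "argmax_set f A = argmax_set g A"
  using assms unfolding argmax_set_def by auto

lemma mutual_info_mixture:
  fixes w :: "'s::finite \<Rightarrow> real" and p :: "'s \<Rightarrow> 'o::finite pmf"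
  assumes w_nonneg: "\<And>s. w s \<ge> 0"
  defines "q \<equiv> \<lambda>x. \<Sum>s\<in>UNIV. w s * pmf (p s) x"
  shows "(\<Sum>s\<in>UNIV. \<Sum>x\<in>UNIV. w s * pmf (p s) x * log 2 (w s * pmf (p s) x / (w s * q x)))
         = ent q - (\<Sum>s\<in>UNIV. w s * ent (pmf (p s)))"
proof -
  have summand: "w s * pmf (p s) x * log 2 (w s * pmf (p s) x / (w s * q x))
      = w s * (pmf (p s) x * log 2 (pmf (p s) x)) - w s * pmf (p s) x * log 2 (q x)" for s x
  proof (cases "w s * pmf (p s) x = 0")
    case False
    then have ws: "w s > 0" and ps: "pmf (p s) x > 0"
      using w_nonneg[of s] by (auto simp: less_le)
    have "w s * pmf (p s) x \<le> q x"
      unfolding q_def by (rule member_le_sum) (use w_nonneg in auto)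
    with mult_pos_pos[OF ws ps] have "q x > 0" by linarith
    moreover have "w s * pmf (p s) x / (w s * q x) = pmf (p s) x / q x"
      using ws by simp
    ultimately have "log 2 (w s * pmf (p s) x / (w s * q x)) = log 2 (pmf (p s) x) - log 2 (q x)"
      using ps by (simp add: log_divide)
    then show ?thesis by (simp only:) (simp add: algebra_simps)
  qed auto
  have "(\<Sum>s\<in>UNIV. \<Sum>x\<in>UNIV. w s * pmf (p s) x * log 2 (q x)) = (\<Sum>x\<in>UNIV. q x * log 2 (q x))"
    unfolding q_def by (subst sum.swap) (simp add: sum_distrib_right)
  then show ?thesis
    unfolding summand ent_def by (simp add: sum_subtractf sum_distrib_left sum_negf)
qed

definition posterior ::
  "'s::finite pmf \<Rightarrow> (nat \<Rightarrow> 's \<Rightarrow> 'q pmf) \<Rightarrow> nat \<Rightarrow> (nat \<Rightarrow> 'q) \<Rightarrow> 's \<Rightarrow> real" where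
  "posterior prior plik K obs s =
     pmf prior s * (\<Prod>k<K. pmf (plik k s) (obs k)) / prob_E prior plik K obs"

definition cond_ent_O_S ::
  "'s::finite pmf \<Rightarrow> (nat \<Rightarrow> 's \<Rightarrow> 'o::finite pmf) \<Rightarrow> (nat \<Rightarrow> 's \<Rightarrow> 'q pmf) \<Rightarrow> nat \<Rightarrow> (nat \<Rightarrow> 'q)
    \<Rightarrow> nat \<Rightarrow> real" where
  "cond_ent_O_S prior lik plik K obs i =
     (\<Sum>s\<in>UNIV. posterior prior plik K obs s * ent (pmf (lik i s)))"

lemma posterior_nonneg:
  assumes "prob_E prior plik K obs > 0"
  shows "posterior prior plik K obs s \<ge> 0"
  using assms unfolding posterior_def by (intro divide_nonneg_pos mult_nonneg_nonneg prod_nonneg) auto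

lemma posterior_pos_imp_prior_pos:
  "posterior prior plik K obs s > 0 \<Longrightarrow> pmf prior s > 0"
  unfolding posterior_def by (cases "pmf prior s = 0") (auto simp: less_le)

lemma cjoint_eq_posterior:
  "cjoint prior lik plik K obs i s x = posterior prior plik K obs s * pmf (lik i s) x"
  unfolding cjoint_def joint_SOE_def posterior_def by simp

lemma cS_eq_posterior:
  fixes lik :: "nat \<Rightarrow> 's::finite \<Rightarrow> 'o::finite pmf"
  shows "cS prior lik plik K obs i s = posterior prior plik K obs s"
  using sum_pmf_eq_1[of UNIV "lik i s"]
  unfolding cS_def cjoint_eq_posterior by (simp add: sum_distrib_left[symmetric])

lemma cond_MI_eq_cond_ent_diff:
  assumes "prob_E prior plik K obs > 0"
  shows "cond_MI prior lik plik K obs i =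
         cond_ent_O prior lik plik K obs i - cond_ent_O_S prior lik plik K obs i"
  using mutual_info_mixture[of "posterior prior plik K obs" "lik i"]
    posterior_nonneg[OF assms]
  unfolding cond_MI_def cond_ent_O_def cond_ent_O_S_def cO_def cS_eq_posterior cjoint_eq_posterior
  by simp

lemma cond_ent_O_S_uniform:
  assumes UOE: "\<And>s. pmf prior s > 0 \<Longrightarrow> ent (pmf (lik i s)) = ent (pmf (lik j s))"
    and "prob_E prior plik K obs > 0"
  shows "cond_ent_O_S prior lik plik K obs i = cond_ent_O_S prior lik plik K obs j"
  unfolding cond_ent_O_S_def
proof (rule sum.cong[OF refl])
  fix s
  show "posterior prior plik K obs s * ent (pmf (lik i s)) =
        posterior prior plik K obs s * ent (pmf (lik j s))"
    using posterior_nonneg[OF assms(2), of s] UOE posterior_pos_imp_prior_pos[of prior plik K obs s]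
    by (cases "posterior prior plik K obs s = 0") auto
qed

theorem theorem1:
  fixes prior :: "'s::finite pmf"
    and lik :: "nat \<Rightarrow> 's \<Rightarrow> 'o::finite pmf"
    and plik :: "nat \<Rightarrow> 's \<Rightarrow> 'q::finite pmf"
    and obs :: "nat \<Rightarrow> 'q"
    and N K :: nat
  assumes UOE: "\<And>s i j. pmf prior s > 0 \<Longrightarrow> i \<in> {1..N} \<Longrightarrow> j \<in> {1..N} \<Longrightarrow>
                  ent (pmf (lik i s)) = ent (pmf (lik j s))"
    and pos: "prob_E prior plik K obs > 0"
  shows "argmax_set (cond_MI prior lik plik K obs) {1..N} =
         argmax_set (cond_ent_O prior lik plik K obs) {1..N}"
proof (rule argmax_set_diff_const)
  fix i assume i: "i \<in> {1..N}"
  have "cond_ent_O_S prior lik plik K obs i = cond_ent_O_S prior lik plik K obs 1"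
    using i by (intro cond_ent_O_S_uniform[OF _ pos] UOE) auto
  then show "cond_MI prior lik plik K obs i =
             cond_ent_O prior lik plik K obs i - cond_ent_O_S prior lik plik K obs 1"
    by (simp add: cond_MI_eq_cond_ent_diff[OF pos])
qed

end
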